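(* The category $\mathrm{OS}_B^{\mathrm{op}}$ is Gröbner, and, with the norm $\nu([-n,n])=n$, it is $\mathsf{O}$-lingual with respect to the maps $\iota_{(E,\sigma)}:|(\mathrm{OS}_B^{\mathrm{op}})_{(E,\sigma)}|\to E^\star$.
   Context: $\mathrm{OS}_B$: objects $(E,\sigma)$ with $E$ totally ordered finite, $\sigma$ an order-reversing involution with unique fixed point $0$; $-e:=\sigma(e)$, $E^+=\{e>0\}$, $|e|=\max\{\pm e\}$, $\mathrm{init}\,D=\min\{|e|:e\in D\}$; morphisms are surjective equivariant maps with (i) $\mathrm{init}\,\varphi^{-1}(e)\in\varphi^{-1}(e)$ for $e\in E_2^+$ and (ii) $\mathrm{init}\,\varphi^{-1}(e)<\mathrm{init}\,\varphi^{-1}(f)$ for $e<f\in E_2^+$. Every object is uniquely isomorphic to some $[-n,n]$. For a category $\mathcal C$ and object $x$, morphisms $\varphi:x\to y$, $\varphi':x\to y'$ satisfy $\varphi\le\varphi'$ if $\varphi'=\psi\circ\varphi$ for some $\psi$; $|\mathcal C_x|$ is the poset of equivalence classes. $\mathcal C$ is directed if its only endomorphisms are identities; it has (G1) if for every $x$ there is a well order $\prec$ on the set of (isomorphism classes of) morphisms out of $x$ with $\varphi\prec\varphi'\Rightarrow\psi\circ\varphi\prec\psi\circ\varphi'$ whenever defined; (G2) if every $|\mathcal C_x|$ is Noetherian (every upward-closed subset has finitely many minimal elements); Gröbner means directed with (G1) and (G2). A norm $\nu$ assigns a natural number to each isomorphism class of objects; $\mathcal C$ is $\mathsf{O}$-lingual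 if for each $x$ there are a finite set $\Sigma_x$ and an injection $\iota_x:|\mathcal C_x|\to\Sigma_x^\star$ such that $\iota_x(\varphi:x\to y)$ has length $\nu(y)$ and $\iota_x(I)$ is an ordered language for every upward-closed $I$. Ordered languages on $\Sigma$: the smallest collection of subsets of $\Sigma^\star$ containing singletons and $\Pi^\star$ ($\Pi\subset\Sigma$) and closed under finite unions and concatenations. Here $\Sigma_{(E,\sigma)}=E$ and, for an $\mathrm{OS}_B$-morphism $\varphi:[-n,n]\to(E,\sigma)$ (a morphism out of $(E,\sigma)$ in $\mathrm{OS}_B^{\mathrm{op}}$), $\iota_{(E,\sigma)}(\varphi)=\varphi(1)\cdots\varphi(n)$. *)

theory Defs
  imports Main
begin

text \<open>We work in the skeleton of OS_B: the object [-n,n] (integers, with the involution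
  e \<mapsto> -e) is represented by the natural number n.  An OS_B-morphism
  [-m,m] \<rightarrow> [-n,n] is represented by a function f :: int \<Rightarrow> int which is 0 outside [-m,m].\<close>

definition preim :: "nat \<Rightarrow> (int \<Rightarrow> int) \<Rightarrow> int \<Rightarrow> int set" where
  "preim m f e = {d \<in> {- int m .. int m}. f d = e}"

definition init :: "int set \<Rightarrow> int" where
  "init D = Min (abs ` D)"

definition osb_mor :: "nat \<Rightarrow> nat \<Rightarrow> (int \<Rightarrow> int) \<Rightarrow> bool" where
  "osb_mor m n f \<longleftrightarrow>
     f ` {- int m .. int m} = {- int n .. int n}
   \<and> (\<forall>e. \<not> \<bar>e\<bar> \<le> int m \<longrightarrow> f e = 0)
   \<and> (\<forall>e \<in> {- int m .. int m}. f (- e) = - f e)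
   \<and> (\<forall>e \<in> {1 .. int n}. init (preim m f e) \<in> preim m f e)
   \<and> (\<forall>e \<in> {1 .. int n}. \<forall>e' \<in> {1 .. int n}. e < e' \<longrightarrow>
         init (preim m f e) < init (preim m f e'))"

text \<open>Morphisms out of [-n,n] in OS_B^op: pairs (m, f) with f an OS_B-morphism [-m,m] \<rightarrow> [-n,n].\<close>
definition mors_out :: "nat \<Rightarrow> (nat \<times> (int \<Rightarrow> int)) set" where
  "mors_out n = {(m, f). osb_mor m n f}"

text \<open>phi \<le> phi' in OS_B^op out of [-n,n]: phi' = psi \<circ> phi (op-composition), i.e. f' = f \<circ> g in OS_B.\<close>
definition op_le :: "nat \<times> (int \<Rightarrow> int) \<Rightarrow> nat \<times> (int \<Rightarrow> int) \<Rightarrow> bool" where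
  "op_le \<phi> \<phi>' \<longleftrightarrow> (\<exists>g. osb_mor (fst \<phi>') (fst \<phi>) g \<and> snd \<phi>' = snd \<phi> \<circ> g)"

definition directed_OSB_op :: bool where
  "directed_OSB_op \<longleftrightarrow>
     (\<forall>n f. osb_mor n n f \<longrightarrow> f = (\<lambda>e. if \<bar>e\<bar> \<le> int n then e else 0))"

definition G1_OSB_op :: bool where
  "G1_OSB_op \<longleftrightarrow> (\<forall>n. \<exists>r. well_order_on (mors_out n) r \<and>
     (\<forall>m k f f' g. osb_mor m n f \<longrightarrow> osb_mor m n f' \<longrightarrow> osb_mor k m g \<longrightarrow>
        ((m, f), (m, f')) \<in> r - Id \<longrightarrow> ((k, f \<circ> g), (k, f' \<circ> g)) \<in> r - Id))"

text \<open>Noetherian (as in the paper): every upward-closed subset of the poset of equivalence classes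
  has finitely many minimal elements.  Stated on the underlying preorder.\<close>
definition upclosed :: "'a set \<Rightarrow> ('a \<Rightarrow> 'a \<Rightarrow> bool) \<Rightarrow> 'a set \<Rightarrow> bool" where
  "upclosed A le I \<longleftrightarrow> I \<subseteq> A \<and> (\<forall>x\<in>I. \<forall>y\<in>A. le x y \<longrightarrow> y \<in> I)"

definition eq_class :: "'a set \<Rightarrow> ('a \<Rightarrow> 'a \<Rightarrow> bool) \<Rightarrow> 'a \<Rightarrow> 'a set" where
  "eq_class A le x = {y \<in> A. le x y \<and> le y x}"

definition noetherian_preorder :: "'a set \<Rightarrow> ('a \<Rightarrow> 'a \<Rightarrow> bool) \<Rightarrow> bool" where
  "noetherian_preorder A le \<longleftrightarrow> (\<forall>I. upclosed A le I \<longrightarrow>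
      finite (eq_class A le ` {x \<in> I. \<forall>y \<in> I. le y x \<longrightarrow> le x y}))"

definition G2_OSB_op :: bool where
  "G2_OSB_op \<longleftrightarrow> (\<forall>n. noetherian_preorder (mors_out n) op_le)"

definition groebner_OSB_op :: bool where
  "groebner_OSB_op \<longleftrightarrow> directed_OSB_op \<and> G1_OSB_op \<and> G2_OSB_op"

inductive_set ordlang :: "'a set \<Rightarrow> 'a list set set" for \<Sigma> :: "'a set" where
  single: "w \<in> lists \<Sigma> \<Longrightarrow> {w} \<in> ordlang \<Sigma>"
| star: "\<Pi> \<subseteq> \<Sigma> \<Longrightarrow> lists \<Pi> \<in> ordlang \<Sigma>"
| empty: "{} \<in> ordlang \<Sigma>"
| union: "A \<in> ordlang \<Sigma> \<Longrightarrow> B \<in> ordlang \<Sigma> \<Longrightarrow> A \<union> B \<in> ordlang \<Sigma>"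
| concat: "A \<in> ordlang \<Sigma> \<Longrightarrow> B \<in> ordlang \<Sigma> \<Longrightarrow> {u @ v | u v. u \<in> A \<and> v \<in> B} \<in> ordlang \<Sigma>"

definition iota :: "nat \<times> (int \<Rightarrow> int) \<Rightarrow> int list" where
  "iota \<phi> = map (snd \<phi>) [1 .. int (fst \<phi>)]"

text \<open>O-lingual w.r.t. the norm nu([-m,m]) = m, alphabets Sigma = [-n,n] and the maps iota.\<close>
definition O_lingual_OSB_op :: bool where
  "O_lingual_OSB_op \<longleftrightarrow> (\<forall>n.
      (\<forall>\<phi> \<in> mors_out n. set (iota \<phi>) \<subseteq> {- int n .. int n} \<and> length (iota \<phi>) = fst \<phi>)
    \<and> (\<forall>\<phi> \<in> mors_out n. \<forall>\<phi>' \<in> mors_out n.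
          iota \<phi> = iota \<phi>' \<longleftrightarrow> (op_le \<phi> \<phi>' \<and> op_le \<phi>' \<phi>))
    \<and> (\<forall>I. upclosed (mors_out n) op_le I \<longrightarrow> iota ` I \<in> ordlang {- int n .. int n}))"

end

theory Submission
  imports Defs "HOL-Library.Sublist" "HOL-Library.Ramsey" "HOL-Library.Nat_Bijection"
begin

text \<open>A morphism \<open>[-m, m] \<rightarrow> [-n, n]\<close> of \<open>OS_B\<close> is determined by its word
  \<open>\<phi>(1) \<dots> \<phi>(m)\<close>, and the words that arise are exactly the words over \<open>[-n, n]\<close> in which
  every \<open>e \<in> [1, n]\<close> occurs and is preceded at its first occurrence only by letters of absolute
  value less than \<open>e\<close>. The only such word of length \<open>n\<close> is \<open>1 2 \<dots> n\<close>, which gives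
  directedness. In the opposite category the words above a word \<open>w\<close> are those obtained by precomposition,
  and they form the ordered language \<open>L(w x) = L(w) x (\<plusminus>letters of w x)\<^sup>*\<close>.
  Precomposition preserves the lexicographic comparison of words of equal length, which gives
  (G1). Annotating every letter with the set of letters preceding it turns the subword order into
  a refinement of the order on morphisms, so by Higman's lemma the order is almost full: an
  upward-closed set has finitely many minimal elements, and its image under \<open>\<iota>\<close> is the union
  of the finitely many languages \<open>L(w)\<close> of their words.\<close>

section \<open>Almost-full relations and Higman's lemma\<close>

definition almost_full_on :: "('a \<Rightarrow> 'a \<Rightarrow> bool) \<Rightarrow> 'a set \<Rightarrow> bool" where
  "almost_full_on P A \<longleftrightarrow> (\<forall>s :: nat \<Rightarrow> 'a. (\<forall>i. s i \<in> A) \<longrightarrow> (\<exists>i j. i < j \<and> P (s i) (s j)))"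

lemma almost_full_onD:
  fixes s :: "nat \<Rightarrow> 'a"
  shows "almost_full_on P A \<Longrightarrow> (\<And>i. s i \<in> A) \<Longrightarrow> \<exists>i j. i < j \<and> P (s i) (s j)"
  unfolding almost_full_on_def by blast

lemma almost_full_on_subset: "almost_full_on P A \<Longrightarrow> B \<subseteq> A \<Longrightarrow> almost_full_on P B"
  unfolding almost_full_on_def by blast

lemma almost_full_on_subsequence:
  fixes K :: "nat set"
  assumes "almost_full_on P A" and "infinite K" and "\<And>i. i \<in> K \<Longrightarrow> s i \<in> A"
  shows "\<exists>i\<in>K. \<exists>j\<in>K. i < j \<and> P (s i) (s j)"
proof -
  have "\<forall>i. s (enumerate K i) \<in> A" using assms(3) enumerate_in_set[OF assms(2)] by blast
  then obtain i j where "i < j" "P (s (enumerate K i)) (s (enumerate K j))"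
    using almost_full_onD[OF assms(1), of "\<lambda>i. s (enumerate K i)"] by blast
  moreover from \<open>i < j\<close> have "enumerate K i < enumerate K j" by (rule enumerate_mono[OF _ assms(2)])
  ultimately show ?thesis using enumerate_in_set[OF assms(2)] by (intro bexI) auto
qed

lemma almost_full_on_Un:
  assumes "almost_full_on P A" and "almost_full_on P B"
  shows "almost_full_on P (A \<union> B)"
  unfolding almost_full_on_def
proof (intro allI impI)
  fix s :: "nat \<Rightarrow> _" assume s: "\<forall>i. s i \<in> A \<union> B"
  have "{i. s i \<in> A} \<union> {i. s i \<in> B} = UNIV" using s by auto
  then have "infinite {i. s i \<in> A} \<or> infinite {i. s i \<in> B}"
    by (metis finite_Un infinite_UNIV_nat)
  then show "\<exists>i j. i < j \<and> P (s i) (s j)"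
  proof
    assume "infinite {i. s i \<in> A}"
    from almost_full_on_subsequence[OF assms(1) this, of s] show ?thesis by auto
  next
    assume "infinite {i. s i \<in> B}"
    from almost_full_on_subsequence[OF assms(2) this, of s] show ?thesis by auto
  qed
qed

text \<open>By Ramsey's theorem a sequence has an infinite subsequence on which either all pairs or no pairs
  are related by \<open>P\<close>; almost fullness excludes the second alternative, so no transitivity is needed.\<close>
lemma almost_full_on_Times:
  assumes P: "almost_full_on P A" and Q: "almost_full_on Q B"
  shows "almost_full_on (\<lambda>x y. P (fst x) (fst y) \<and> Q (snd x) (snd y)) (A \<times> B)"
  unfolding almost_full_on_def
proof (intro allI impI)
  fix s :: "nat \<Rightarrow> _" assume s: "\<forall>i. s i \<in> A \<times> B"
  define c :: "nat set \<Rightarrow> nat" where "c X = (if P (fst (s (Min X))) (fst (s (Max X))) then 0 else 1)" for X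
  have "c X < 2" for X unfolding c_def by simp
  then obtain Y t where Y: "infinite Y" "t < 2" and hom: "\<forall>i\<in>Y. \<forall>j\<in>Y. i \<noteq> j \<longrightarrow> c {i, j} = t"
    using Ramsey2[OF infinite_UNIV_nat, of c 2] by blast
  have c_less: "c {i, j} = (if P (fst (s i)) (fst (s j)) then 0 else 1)" if "i < j" for i j
    using that unfolding c_def by (simp add: min_def max_def)
  have fst_in: "fst (s i) \<in> A" and snd_in: "snd (s i) \<in> B" for i
    using s by (auto simp: mem_Times_iff)
  obtain i j where ij: "i \<in> Y" "j \<in> Y" "i < j" "P (fst (s i)) (fst (s j))"
    using almost_full_on_subsequence[OF P Y(1), of "\<lambda>i. fst (s i)"] fst_in by blast
  have "c {i, j} = t" using hom ij(1-3) by simp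
  moreover have "c {i, j} = 0" using c_less[OF ij(3)] ij(4) by simp
  ultimately have hom0: "c {i', j'} = 0" if "i' \<in> Y" "j' \<in> Y" "i' < j'" for i' j'
    using hom that by simp
  obtain i' j' where i'j': "i' \<in> Y" "j' \<in> Y" "i' < j'" "Q (snd (s i')) (snd (s j'))"
    using almost_full_on_subsequence[OF Q Y(1), of "\<lambda>i. snd (s i)"] snd_in by blast
  have "P (fst (s i')) (fst (s j'))"
    using hom0[OF i'j'(1-3)] c_less[OF i'j'(3)] by (simp split: if_splits)
  with i'j' show "\<exists>i j. i < j \<and> P (fst (s i)) (fst (s j)) \<and> Q (snd (s i)) (snd (s j))" by blast
qed

lemma almost_full_on_image:
  assumes "almost_full_on Q A" and "\<And>x y. x \<in> A \<Longrightarrow> y \<in> A \<Longrightarrow> Q x y \<Longrightarrow> P (h x) (h y)"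
  shows "almost_full_on P (h ` A)"
  unfolding almost_full_on_def
proof (intro allI impI)
  fix s :: "nat \<Rightarrow> _" assume "\<forall>i. s i \<in> h ` A"
  then have "\<forall>i. \<exists>x. x \<in> A \<and> s i = h x" by blast
  then obtain t where t: "\<And>i. t i \<in> A" "\<And>i. s i = h (t i)" by metis
  then obtain i j where "i < j" "Q (t i) (t j)" using almost_full_onD[OF assms(1)] by blast
  then show "\<exists>i j. i < j \<and> P (s i) (s j)" using assms(2) t by metis
qed

lemma almost_full_on_inv_image:
  assumes "almost_full_on Q B" and "h ` A \<subseteq> B" and "\<And>x y. x \<in> A \<Longrightarrow> y \<in> A \<Longrightarrow> Q (h x) (h y) \<Longrightarrow> P x y"
  shows "almost_full_on P A"
  unfolding almost_full_on_def
proof (intro allI impI)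
  fix s :: "nat \<Rightarrow> _" assume "\<forall>i. s i \<in> A"
  moreover from this have "\<forall>i. h (s i) \<in> B" using assms(2) by blast
  then obtain i j where "i < j" "Q (h (s i)) (h (s j))"
    using almost_full_onD[OF assms(1), of "\<lambda>i. h (s i)"] by blast
  ultimately show "\<exists>i j. i < j \<and> P (s i) (s j)" using assms(3) by blast
qed

lemma finite_antichain_if_almost_full_on:
  assumes "almost_full_on P A" and "M \<subseteq> A" and "\<And>x y. x \<in> M \<Longrightarrow> y \<in> M \<Longrightarrow> P x y \<Longrightarrow> x = y"
  shows "finite M"
proof (rule ccontr)
  assume "infinite M"
  then obtain s :: "nat \<Rightarrow> _" where "inj s" "range s \<subseteq> M"
    using infinite_countable_subset by blast
  moreover obtain i j where "i < j" "P (s i) (s j)"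
    using almost_full_onD[OF assms(1), of s] \<open>range s \<subseteq> M\<close> assms(2) by blast
  ultimately show False using assms(3) by (metis inj_eq less_irrefl range_subsetD)
qed

definition words_avoiding :: "'a set \<Rightarrow> 'a list \<Rightarrow> 'a list set" where
  "words_avoiding A x = {w \<in> lists A. \<not> subseq x w}"

lemma words_avoiding_Cons_subset:
  "words_avoiding A (a # x) \<subseteq>
     lists (A - {a}) \<union> (\<lambda>(v, w). v @ a # w) ` (lists (A - {a}) \<times> words_avoiding A x)"
proof
  fix w assume w: "w \<in> words_avoiding A (a # x)"
  show "w \<in> lists (A - {a}) \<union> (\<lambda>(v, w). v @ a # w) ` (lists (A - {a}) \<times> words_avoiding A x)"
  proof (cases "a \<in> set w")
    case False then show ?thesis using w by (auto simp: words_avoiding_def)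
  next
    case True
    then obtain v w' where vw: "w = v @ a # w'" "a \<notin> set v" by (meson split_list_first)
    then have "\<not> subseq x w'" using w by (auto simp: words_avoiding_def)
    then have "(v, w') \<in> lists (A - {a}) \<times> words_avoiding A x"
      using w vw by (auto simp: words_avoiding_def)
    then show ?thesis using vw by force
  qed
qed

lemma almost_full_on_words_avoiding:
  assumes "\<And>a. a \<in> set x \<Longrightarrow> almost_full_on subseq (lists (A - {a}))"
  shows "almost_full_on subseq (words_avoiding A x)"
  using assms
proof (induction x)
  case Nil
  then show ?case by (simp add: words_avoiding_def almost_full_on_def)
next
  case (Cons a x)
  have avoid_a: "almost_full_on subseq (lists (A - {a}))" using Cons.prems by simp
  have "almost_full_on subseq (words_avoiding A x)" using Cons by simp
  with avoid_a have "almost_full_on (\<lambda>p q. subseq (fst p) (fst q) \<and> subseq (snd p) (snd q))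
      (lists (A - {a}) \<times> words_avoiding A x)"
    by (rule almost_full_on_Times)
  then have "almost_full_on subseq ((\<lambda>(v, w). v @ a # w) ` (lists (A - {a}) \<times> words_avoiding A x))"
    by (rule almost_full_on_image) (auto intro: list_emb_append_mono)
  with avoid_a show ?case
    by (rule almost_full_on_subset[OF almost_full_on_Un words_avoiding_Cons_subset])
qed

theorem higman: "finite A \<Longrightarrow> almost_full_on subseq (lists A)"
proof (induction "card A" arbitrary: A rule: less_induct)
  case less
  have smaller: "almost_full_on subseq (lists (A - {a}))" if "a \<in> A" for a
    using less(1)[OF card_Diff1_less[OF less(2) that]] less(2) by simp
  show ?case
    unfolding almost_full_on_def
  proof (intro allI impI)
    fix s :: "nat \<Rightarrow> _" assume s: "\<forall>i. s i \<in> lists A"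
    show "\<exists>i j. i < j \<and> subseq (s i) (s j)"
    proof (cases "\<exists>j>0. subseq (s 0) (s j)")
      case False
      then have "\<forall>i. s (Suc i) \<in> words_avoiding A (s 0)" using s by (auto simp: words_avoiding_def)
      moreover have "almost_full_on subseq (words_avoiding A (s 0))"
        using s smaller by (intro almost_full_on_words_avoiding) auto
      ultimately obtain i j where "i < j" "subseq (s (Suc i)) (s (Suc j))"
        using almost_full_onD[of subseq _ "\<lambda>i. s (Suc i)"] by blast
      then show ?thesis by (intro exI[of _ "Suc i"] exI[of _ "Suc j"]) simp
    qed auto
  qed
qed

section \<open>Words and their odd extensions\<close>

definition odd_ext :: "int list \<Rightarrow> int \<Rightarrow> int" where
  "odd_ext w d =
     (if 1 \<le> d \<and> d \<le> int (length w) then w ! nat (d - 1)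
      else if 1 \<le> - d \<and> - d \<le> int (length w) then - (w ! nat (- d - 1)) else 0)"

lemma abs_le_int_cases:
  assumes "\<bar>d\<bar> \<le> int m"
  obtains "d = 0" | j where "j < m" "d = 1 + int j" | j where "j < m" "d = - int j - 1"
proof -
  consider "d = 0" | "d > 0" | "d < 0" by linarith
  then show thesis
  proof cases
    case 2
    then show thesis using assms that(2)[of "nat (d - 1)"] by auto
  next
    case 3
    then show thesis using assms that(3)[of "nat (- d - 1)"] by auto
  qed (use that in auto)
qed

lemma odd_ext_zero [simp]: "odd_ext w 0 = 0"
  by (simp add: odd_ext_def)

lemma odd_ext_minus: "odd_ext w (- d) = - odd_ext w d"
  by (auto simp: odd_ext_def)

lemma odd_ext_nth [simp]: "j < length w \<Longrightarrow> odd_ext w (1 + int j) = w ! j"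
  by (simp add: odd_ext_def)

lemma odd_ext_nth_minus [simp]: "j < length w \<Longrightarrow> odd_ext w (- int j - 1) = - (w ! j)"
  by (simp add: odd_ext_def)

lemma odd_ext_outside: "\<not> \<bar>d\<bar> \<le> int (length w) \<Longrightarrow> odd_ext w d = 0"
  by (auto simp: odd_ext_def)

lemma nth_upto_one: "j < m \<Longrightarrow> [1 .. int m] ! j = 1 + int j"
  by (simp add: nth_upto)

lemma map_odd_ext_upto [simp]: "map (odd_ext w) [1 .. int (length w)] = w"
  by (rule nth_equalityI) (simp_all add: nth_upto_one)

lemma odd_ext_inject: "odd_ext w = odd_ext w' \<Longrightarrow> length w = length w' \<Longrightarrow> w = w'"
  by (metis map_odd_ext_upto)

lemma odd_ext_comp: "odd_ext w \<circ> odd_ext u = odd_ext (map (odd_ext w) u)"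
proof
  fix d
  show "(odd_ext w \<circ> odd_ext u) d = odd_ext (map (odd_ext w) u) d"
  proof (cases "\<bar>d\<bar> \<le> int (length u)")
    case True
    then show ?thesis by (cases rule: abs_le_int_cases) (simp_all add: odd_ext_minus)
  qed (simp add: odd_ext_outside)
qed

lemma odd_ext_take: "\<bar>d\<bar> \<le> int i \<Longrightarrow> odd_ext (take i w) d = odd_ext w d"
proof (cases "\<bar>d\<bar> \<le> int (length w)")
  case True
  moreover assume "\<bar>d\<bar> \<le> int i"
  ultimately have "\<bar>d\<bar> \<le> int (length (take i w))" by simp
  then show ?thesis by (cases rule: abs_le_int_cases) auto
qed (simp add: odd_ext_outside)

lemma odd_ext_append: "\<bar>d\<bar> \<le> int (length w) \<Longrightarrow> odd_ext (w @ v) d = odd_ext w d"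
  using odd_ext_take[of d "length w" "w @ v"] by simp

lemma odd_ext_upto: "odd_ext [1 .. int n] = (\<lambda>e. if \<bar>e\<bar> \<le> int n then e else 0)"
proof
  fix e
  show "odd_ext [1 .. int n] e = (if \<bar>e\<bar> \<le> int n then e else 0)"
  proof (cases "\<bar>e\<bar> \<le> int n")
    case True
    then show ?thesis by (cases rule: abs_le_int_cases) (simp_all add: nth_upto_one)
  qed (simp add: odd_ext_outside)
qed

definition signed_letters :: "int list \<Rightarrow> int set" where
  "signed_letters w = insert 0 (set w \<union> uminus ` set w)"

lemma odd_ext_image: "odd_ext w ` {- int (length w) .. int (length w)} = signed_letters w"
proof
  show "odd_ext w ` {- int (length w) .. int (length w)} \<subseteq> signed_letters w"
  proof
    fix y assume "y \<in> odd_ext w ` {- int (length w) .. int (length w)}"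
    then obtain d where "\<bar>d\<bar> \<le> int (length w)" "y = odd_ext w d" by force
    then show "y \<in> signed_letters w"
      by (cases rule: abs_le_int_cases) (auto simp: signed_letters_def)
  qed
  show "signed_letters w \<subseteq> odd_ext w ` {- int (length w) .. int (length w)}"
  proof
    fix y assume "y \<in> signed_letters w"
    then consider "y = 0" | j where "j < length w" "y = w ! j" | j where "j < length w" "y = - (w ! j)"
      unfolding signed_letters_def by (auto simp: in_set_conv_nth)
    then show "y \<in> odd_ext w ` {- int (length w) .. int (length w)}"
    proof cases
      case 1 then show ?thesis by (intro image_eqI[of _ _ 0]) auto
    next
      case 2 then show ?thesis by (intro image_eqI[of _ _ "1 + int j"]) auto
    next
      case 3 then show ?thesis by (intro image_eqI[of _ _ "- int j - 1"]) auto
    qed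
  qed
qed

lemma signed_letters_subset: "set w \<subseteq> {- int n .. int n} \<Longrightarrow> signed_letters w \<subseteq> {- int n .. int n}"
  unfolding signed_letters_def by auto

lemma signed_letters_mono: "signed_letters w \<subseteq> signed_letters (w @ v)"
  unfolding signed_letters_def by auto

definition osb_word :: "nat \<Rightarrow> int list \<Rightarrow> bool" where
  "osb_word n w \<longleftrightarrow> set w \<subseteq> {- int n .. int n} \<and>
     (\<forall>e \<in> {1 .. int n}. \<exists>j < length w. w ! j = e \<and> (\<forall>i < j. \<bar>w ! i\<bar> < e))"

lemma osb_wordE:
  assumes "e \<in> {1 .. int n}" and "osb_word n w"
  obtains j where "j < length w" "w ! j = e" "\<forall>i < j. \<bar>w ! i\<bar> < e"
  using assms unfolding osb_word_def by blast

lemma osb_word_letters: "osb_word n w \<Longrightarrow> set w \<subseteq> {- int n .. int n}"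
  unfolding osb_word_def by blast

lemma first_occurrences_ordered:
  fixes w :: "int list"
  assumes "w ! j = e" "\<forall>i < j. \<bar>w ! i\<bar> < e" and "w ! j' = e'" "\<forall>i < j'. \<bar>w ! i\<bar> < e'"
    and "0 < e" "e < e'"
  shows "j < j'"
proof (rule ccontr)
  assume "\<not> j < j'"
  moreover have "j \<noteq> j'" using assms(1,3,6) by auto
  ultimately have "j' < j" by simp
  then have "\<bar>w ! j'\<bar> < e" using assms(2) by blast
  then show False using assms(3,5,6) by simp
qed

lemma osb_word_0: "osb_word 0 w \<longleftrightarrow> set w \<subseteq> {0}"
  unfolding osb_word_def by auto

lemma osb_word_SucE:
  assumes w: "osb_word (Suc n) w"
  obtains v b where "w = v @ int (Suc n) # b" "osb_word n v" "set b \<subseteq> {- int (Suc n) .. int (Suc n)}"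
proof -
  have "int (Suc n) \<in> {1 .. int (Suc n)}" by simp
  then obtain j where j: "j < length w" "w ! j = int (Suc n)" "\<forall>i < j. \<bar>w ! i\<bar> < int (Suc n)"
    using w by (rule osb_wordE)
  have "w = take j w @ int (Suc n) # drop (Suc j) w"
    using id_take_nth_drop[OF j(1)] j(2) by simp
  moreover have "osb_word n (take j w)"
    unfolding osb_word_def
  proof (intro conjI ballI)
    show "set (take j w) \<subseteq> {- int n .. int n}"
    proof
      fix x assume "x \<in> set (take j w)"
      then obtain i where "i < j" "x = w ! i" by (auto simp: in_set_conv_nth)
      then show "x \<in> {- int n .. int n}" using j(3) by fastforce
    qed
  next
    fix e assume e: "e \<in> {1 .. int n}"
    then have "e \<in> {1 .. int (Suc n)}" by auto
    then obtain j' where j': "j' < length w" "w ! j' = e" "\<forall>i < j'. \<bar>w ! i\<bar> < e"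
      using w by (rule osb_wordE)
    have "j' < j" using first_occurrences_ordered[OF j'(2,3) j(2,3)] e by simp
    then show "\<exists>j' < length (take j w). take j w ! j' = e \<and> (\<forall>i < j'. \<bar>take j w ! i\<bar> < e)"
      using j' j(1) by (intro exI[of _ j']) auto
  qed
  moreover have "set (drop (Suc j) w) \<subseteq> {- int (Suc n) .. int (Suc n)}"
    using set_drop_subset[of "Suc j" w] osb_word_letters[OF w] by (rule order_trans)
  ultimately show thesis by (rule that)
qed

lemma osb_word_SucI:
  assumes v: "osb_word n v" and b: "set b \<subseteq> {- int (Suc n) .. int (Suc n)}"
  shows "osb_word (Suc n) (v @ int (Suc n) # b)"
  unfolding osb_word_def
proof (intro conjI ballI)
  show "set (v @ int (Suc n) # b) \<subseteq> {- int (Suc n) .. int (Suc n)}"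
    using osb_word_letters[OF v] b by auto
next
  fix e assume e: "e \<in> {1 .. int (Suc n)}"
  show "\<exists>j < length (v @ int (Suc n) # b). (v @ int (Suc n) # b) ! j = e \<and>
          (\<forall>i < j. \<bar>(v @ int (Suc n) # b) ! i\<bar> < e)"
  proof (cases "e = int (Suc n)")
    case True
    have "\<bar>v ! i\<bar> < e" if "i < length v" for i
      using that osb_word_letters[OF v] True nth_mem[OF that] by fastforce
    then show ?thesis using True by (intro exI[of _ "length v"]) (auto simp: nth_append)
  next
    case False
    with e have "e \<in> {1 .. int n}" by auto
    then obtain j where "j < length v" "v ! j = e" "\<forall>i < j. \<bar>v ! i\<bar> < e"
      using v by (rule osb_wordE)
    then show ?thesis by (intro exI[of _ j]) (auto simp: nth_append)
  qed
qed

lemma osb_word_length: "osb_word n w \<Longrightarrow> n \<le> length w"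
proof (induction n arbitrary: w)
  case (Suc n)
  then show ?case by (elim osb_word_SucE) (fastforce dest: Suc.IH)
qed simp

lemma osb_word_length_eq: "osb_word n w \<Longrightarrow> length w = n \<Longrightarrow> w = [1 .. int n]"
proof (induction n arbitrary: w)
  case (Suc n)
  from Suc.prems(1) obtain v b where w: "w = v @ int (Suc n) # b" and v: "osb_word n v"
    by (rule osb_word_SucE)
  with Suc.prems(2) osb_word_length[OF v] have "length v = n" "b = []" by auto
  with Suc.IH[OF v] w have "w = [1 .. int n] @ [int (Suc n)]" by simp
  also have "\<dots> = [1 .. int (Suc n)]" by (simp add: upto_rec2)
  finally show ?case .
qed (simp add: osb_word_0)

lemma osb_word_upto: "osb_word n [1 .. int n]"
  unfolding osb_word_def
proof (intro conjI ballI)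
  fix e assume "e \<in> {1 .. int n}"
  then show "\<exists>j < length [1 .. int n]. [1 .. int n] ! j = e \<and> (\<forall>i < j. \<bar>[1 .. int n] ! i\<bar> < e)"
    by (intro exI[of _ "nat (e - 1)"]) (auto simp: nth_upto_one)
qed auto

lemma osb_word_append:
  assumes u: "osb_word n u" and v: "set v \<subseteq> {- int n .. int n}"
  shows "osb_word n (u @ v)"
  unfolding osb_word_def
proof (intro conjI ballI)
  show "set (u @ v) \<subseteq> {- int n .. int n}" using osb_word_letters[OF u] v by simp
next
  fix e assume "e \<in> {1 .. int n}"
  then obtain j where "j < length u" "u ! j = e" "\<forall>i < j. \<bar>u ! i\<bar> < e"
    using u by (rule osb_wordE)
  then show "\<exists>j < length (u @ v). (u @ v) ! j = e \<and> (\<forall>i < j. \<bar>(u @ v) ! i\<bar> < e)"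
    by (intro exI[of _ j]) (simp add: nth_append)
qed

lemma abs_odd_ext_less:
  assumes "\<forall>i < j. \<bar>w ! i\<bar> < e" and "0 < e" and "\<bar>d\<bar> \<le> int j" and "j \<le> length w"
  shows "\<bar>odd_ext w d\<bar> < e"
  using assms(3)
proof (cases rule: abs_le_int_cases)
  case (2 i) then show ?thesis using assms by simp
next
  case (3 i) then show ?thesis using assms by simp
qed (use assms in simp)

lemma osb_word_comp:
  assumes u: "osb_word m u" and w: "osb_word n w" and "length w = m"
  shows "osb_word n (map (odd_ext w) u)"
  unfolding osb_word_def
proof (intro conjI ballI)
  have "set (map (odd_ext w) u) \<subseteq> odd_ext w ` {- int m .. int m}"
    using osb_word_letters[OF u] by auto
  also have "\<dots> = signed_letters w" using odd_ext_image[of w] \<open>length w = m\<close> by simp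
  also have "\<dots> \<subseteq> {- int n .. int n}" by (rule signed_letters_subset[OF osb_word_letters[OF w]])
  finally show "set (map (odd_ext w) u) \<subseteq> {- int n .. int n}" .
next
  fix e assume e: "e \<in> {1 .. int n}"
  then obtain j where j: "j < length w" "w ! j = e" "\<forall>i < j. \<bar>w ! i\<bar> < e"
    using w by (rule osb_wordE)
  have "1 + int j \<in> {1 .. int m}" using j(1) \<open>length w = m\<close> by auto
  then obtain q where q: "q < length u" "u ! q = 1 + int j" "\<forall>i < q. \<bar>u ! i\<bar> < 1 + int j"
    using u by (rule osb_wordE)
  have "\<bar>odd_ext w (u ! i)\<bar> < e" if "i < q" for i
  proof (rule abs_odd_ext_less[OF j(3)])
    show "0 < e" "j \<le> length w" using e j(1) by auto
    show "\<bar>u ! i\<bar> \<le> int j" using q(3) that by fastforce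
  qed
  then show "\<exists>q < length (map (odd_ext w) u). map (odd_ext w) u ! q = e \<and>
               (\<forall>i < q. \<bar>map (odd_ext w) u ! i\<bar> < e)"
    using q j by (intro exI[of _ q]) auto
qed

lemma signed_letters_osb_word: "osb_word n w \<Longrightarrow> signed_letters w = {- int n .. int n}"
proof
  assume w: "osb_word n w"
  then show "signed_letters w \<subseteq> {- int n .. int n}"
    by (rule signed_letters_subset[OF osb_word_letters])
  show "{- int n .. int n} \<subseteq> signed_letters w"
  proof
    fix x assume "x \<in> {- int n .. int n}"
    then consider "x = 0" | "x \<in> {1 .. int n}" | "- x \<in> {1 .. int n}"
      by (cases x "0::int" rule: linorder_cases) auto
    then show "x \<in> signed_letters w"
    proof cases
      case 2
      then obtain j where "j < length w" "w ! j = x" using w by (rule osb_wordE)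
      then show ?thesis unfolding signed_letters_def by auto
    next
      case 3
      then obtain j where "j < length w" "w ! j = - x" using w by (rule osb_wordE)
      then have "- x \<in> set w" by (metis nth_mem)
      then have "x \<in> uminus ` set w" by (rule rev_image_eqI) simp
      then show ?thesis unfolding signed_letters_def by simp
    qed (simp add: signed_letters_def)
  qed
qed

section \<open>\<open>OS_B\<close>-morphisms as words\<close>

lemma finite_preim: "finite (preim m f e)"
  unfolding preim_def by (rule finite_subset[OF _ finite_atLeastAtMost_int]) auto

lemma init_preim_le: "d \<in> preim m f e \<Longrightarrow> init (preim m f e) \<le> \<bar>d\<bar>"
  unfolding init_def by (simp add: finite_preim)

lemma init_preim_mem_abs: "preim m f e \<noteq> {} \<Longrightarrow> init (preim m f e) \<in> abs ` preim m f e"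
  unfolding init_def by (simp add: finite_preim)

lemma init_preim_odd_ext:
  assumes j: "j < length w" "w ! j = e" "\<forall>i < j. \<bar>w ! i\<bar> < e" and "0 < e"
  shows "1 + int j \<in> preim (length w) (odd_ext w) e"
    and "init (preim (length w) (odd_ext w) e) = 1 + int j"
proof -
  show mem: "1 + int j \<in> preim (length w) (odd_ext w) e"
    unfolding preim_def using j by simp
  have "1 + int j \<le> \<bar>d\<bar>" if "d \<in> preim (length w) (odd_ext w) e" for d
  proof (rule ccontr)
    assume "\<not> 1 + int j \<le> \<bar>d\<bar>"
    then have "\<bar>odd_ext w d\<bar> < e" using abs_odd_ext_less[OF j(3) \<open>0 < e\<close>] j(1) by simp
    then show False using that \<open>0 < e\<close> unfolding preim_def by simp
  qed
  then show "init (preim (length w) (odd_ext w) e) = 1 + int j"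
    using init_preim_le[OF mem] init_preim_mem_abs[of "length w" "odd_ext w" e] mem
    by fastforce
qed

lemma osb_mor_odd_ext:
  assumes w: "osb_word n w"
  shows "osb_mor (length w) n (odd_ext w)"
  unfolding osb_mor_def
proof (intro conjI allI impI ballI)
  show "odd_ext w ` {- int (length w) .. int (length w)} = {- int n .. int n}"
    using odd_ext_image signed_letters_osb_word[OF w] by simp
next
  fix e :: int assume e: "e \<in> {1 .. int n}"
  then obtain j where j: "j < length w" "w ! j = e" "\<forall>i < j. \<bar>w ! i\<bar> < e"
    using w by (rule osb_wordE)
  moreover from e have "0 < e" by simp
  ultimately show "init (preim (length w) (odd_ext w) e) \<in> preim (length w) (odd_ext w) e"
    using init_preim_odd_ext[OF j] by simp
next
  fix e e' :: int assume e: "e \<in> {1 .. int n}" and e': "e' \<in> {1 .. int n}" and "e < e'"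
  obtain j where j: "j < length w" "w ! j = e" "\<forall>i < j. \<bar>w ! i\<bar> < e"
    using e w by (rule osb_wordE)
  obtain j' where j': "j' < length w" "w ! j' = e'" "\<forall>i < j'. \<bar>w ! i\<bar> < e'"
    using e' w by (rule osb_wordE)
  have "j < j'" using first_occurrences_ordered[OF j(2,3) j'(2,3)] e \<open>e < e'\<close> by simp
  moreover have "0 < e" "0 < e'" using e e' by auto
  ultimately show "init (preim (length w) (odd_ext w) e) < init (preim (length w) (odd_ext w) e')"
    using init_preim_odd_ext(2)[OF j] init_preim_odd_ext(2)[OF j'] by simp
qed (simp_all add: odd_ext_outside odd_ext_minus)

lemma osb_mor_eq_odd_ext:
  assumes "osb_mor m n f"
  shows "f = odd_ext (map f [1 .. int m])"
proof
  fix d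
  have outside: "\<And>e. \<not> \<bar>e\<bar> \<le> int m \<Longrightarrow> f e = 0"
    and odd: "\<And>e. e \<in> {- int m .. int m} \<Longrightarrow> f (- e) = - f e"
    using assms unfolding osb_mor_def by auto
  show "f d = odd_ext (map f [1 .. int m]) d"
  proof (cases "\<bar>d\<bar> \<le> int m")
    case True
    then show ?thesis
    proof (cases rule: abs_le_int_cases)
      case 1 then show ?thesis using odd[of 0] by simp
    next
      case (2 j) then show ?thesis by (simp add: nth_upto_one)
    next
      case (3 j)
      have "f (- (1 + int j)) = - f (1 + int j)" using 3 by (intro odd) simp
      moreover have "d = - (1 + int j)" using 3 by simp
      ultimately have "f d = - f (1 + int j)" by (simp only:)
      with 3 show ?thesis by (simp add: nth_upto_one)
    qed
  qed (simp add: outside odd_ext_outside)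
qed

lemma init_preim_odd_ext_le:
  assumes "i < length w" and "w ! i \<noteq> 0"
  shows "init (preim (length w) (odd_ext w) \<bar>w ! i\<bar>) \<le> 1 + int i"
proof (cases "w ! i > 0")
  case True
  with assms have "1 + int i \<in> preim (length w) (odd_ext w) \<bar>w ! i\<bar>" unfolding preim_def by simp
  then show ?thesis using init_preim_le by fastforce
next
  case False
  with assms have "- int i - 1 \<in> preim (length w) (odd_ext w) \<bar>w ! i\<bar>" unfolding preim_def by simp
  then show ?thesis using init_preim_le by fastforce
qed

lemma init_preim_odd_ext_mem:
  assumes "init (preim (length w) (odd_ext w) e) \<in> preim (length w) (odd_ext w) e" and "e \<noteq> 0"
  obtains j where "j < length w" "init (preim (length w) (odd_ext w) e) = 1 + int j" "w ! j = e"
proof -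
  define t where "t = init (preim (length w) (odd_ext w) e)"
  have t: "t \<in> preim (length w) (odd_ext w) e" using assms(1) unfolding t_def .
  then have "t \<in> abs ` preim (length w) (odd_ext w) e" unfolding t_def by (intro init_preim_mem_abs) auto
  moreover have "t \<noteq> 0" "t \<le> int (length w)" using t assms(2) unfolding preim_def by auto
  ultimately have "1 \<le> t" by auto
  define j where "j = nat (t - 1)"
  have j: "j < length w" "t = 1 + int j" using \<open>1 \<le> t\<close> \<open>t \<le> _\<close> unfolding j_def by auto
  with t have "w ! j = e" unfolding preim_def by simp
  with j show thesis unfolding t_def by (rule that)
qed

text \<open>A letter of absolute value \<open>e' \<ge> e\<close> before the first occurrence of \<open>e\<close> would put the
  initial element of the fibre over \<open>e'\<close> below that of the fibre over \<open>e\<close>.\<close>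
lemma osb_word_if_osb_mor:
  assumes mor: "osb_mor (length w) n (odd_ext w)"
  shows "osb_word n w"
proof -
  let ?D = "\<lambda>e. preim (length w) (odd_ext w) e"
  have "signed_letters w = {- int n .. int n}"
    using mor odd_ext_image[of w] unfolding osb_mor_def by simp
  then have letters: "set w \<subseteq> {- int n .. int n}" unfolding signed_letters_def by blast
  have init_in: "init (?D e) \<in> ?D e" and init_less: "e < e' \<Longrightarrow> init (?D e) < init (?D e')"
    if "e \<in> {1 .. int n}" "e' \<in> {1 .. int n}" for e e'
    using mor that unfolding osb_mor_def by auto
  show ?thesis
    unfolding osb_word_def
  proof (intro conjI ballI)
    show "set w \<subseteq> {- int n .. int n}" by (rule letters)
  next
    fix e assume e: "e \<in> {1 .. int n}"
    obtain j where j: "j < length w" "init (?D e) = 1 + int j" "w ! j = e"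
      using init_in[OF e e] e by (elim init_preim_odd_ext_mem) auto
    have "\<bar>w ! i\<bar> < e" if "i < j" for i
    proof (rule ccontr)
      assume "\<not> \<bar>w ! i\<bar> < e"
      moreover have "w ! i \<in> {- int n .. int n}" using letters that j(1) nth_mem[of i w] by force
      ultimately have "w ! i \<noteq> 0" and wi: "\<bar>w ! i\<bar> \<in> {1 .. int n}" "e \<le> \<bar>w ! i\<bar>"
        using e by auto
      then have "init (?D e) \<le> init (?D \<bar>w ! i\<bar>)"
        using init_less[OF e wi(1)] by (cases "e = \<bar>w ! i\<bar>") auto
      also have "\<dots> \<le> 1 + int i" using init_preim_odd_ext_le[OF _ \<open>w ! i \<noteq> 0\<close>] that j(1) by simp
      finally show False using j(2) that by simp
    qed
    with j(1,3) show "\<exists>j < length w. w ! j = e \<and> (\<forall>i < j. \<bar>w ! i\<bar> < e)" by blast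
  qed
qed

theorem osb_mor_iff_odd_ext:
  "osb_mor m n f \<longleftrightarrow> (\<exists>w. length w = m \<and> osb_word n w \<and> f = odd_ext w)"
proof
  assume f: "osb_mor m n f"
  define w where "w = map f [1 .. int m]"
  have "f = odd_ext w" unfolding w_def by (rule osb_mor_eq_odd_ext[OF f])
  moreover have "length w = m" unfolding w_def by simp
  ultimately have "osb_word n w" using f osb_word_if_osb_mor by blast
  then show "\<exists>w. length w = m \<and> osb_word n w \<and> f = odd_ext w"
    using \<open>f = odd_ext w\<close> \<open>length w = m\<close> by blast
qed (auto intro: osb_mor_odd_ext)

section \<open>The preorder on morphisms out of \<open>[-n, n]\<close>\<close>

definition mor_of_word :: "int list \<Rightarrow> nat \<times> (int \<Rightarrow> int)" where
  "mor_of_word w = (length w, odd_ext w)"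

lemma iota_mor_of_word [simp]: "iota (mor_of_word w) = w"
  by (simp add: iota_def mor_of_word_def)

lemma mors_out_eq: "mors_out n = mor_of_word ` {w. osb_word n w}"
  unfolding mors_out_def mor_of_word_def by (auto simp: osb_mor_iff_odd_ext)

lemma mors_outE:
  assumes "\<phi> \<in> mors_out n"
  obtains w where "osb_word n w" "\<phi> = mor_of_word w"
  using assms unfolding mors_out_eq by blast

lemma mor_of_word_in_mors_out: "osb_word n w \<Longrightarrow> mor_of_word w \<in> mors_out n"
  unfolding mors_out_eq by blast

lemma mors_out_iota: "\<phi> \<in> mors_out n \<Longrightarrow> \<phi> = mor_of_word (iota \<phi>)"
  by (erule mors_outE) simp

lemma osb_word_iota: "\<phi> \<in> mors_out n \<Longrightarrow> osb_word n (iota \<phi>)"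
  by (erule mors_outE) simp

definition principal_lang :: "int list \<Rightarrow> int list set" where
  "principal_lang w = {map (odd_ext w) u | u. osb_word (length w) u}"

lemma op_le_mor_of_word: "op_le (mor_of_word w) (mor_of_word w') \<longleftrightarrow> w' \<in> principal_lang w"
proof
  assume "op_le (mor_of_word w) (mor_of_word w')"
  then obtain g where g: "osb_mor (length w') (length w) g" "odd_ext w' = odd_ext w \<circ> g"
    unfolding op_le_def mor_of_word_def by auto
  then obtain u where u: "length u = length w'" "osb_word (length w) u" "g = odd_ext u"
    by (auto simp: osb_mor_iff_odd_ext)
  have "odd_ext w' = odd_ext (map (odd_ext w) u)" using g(2) u(3) by (simp add: odd_ext_comp)
  then have "w' = map (odd_ext w) u" by (rule odd_ext_inject) (simp add: u(1))
  with u(2) show "w' \<in> principal_lang w" unfolding principal_lang_def by blast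
next
  assume "w' \<in> principal_lang w"
  then obtain u where u: "osb_word (length w) u" "w' = map (odd_ext w) u"
    unfolding principal_lang_def by blast
  then have "osb_mor (length w') (length w) (odd_ext u) \<and> odd_ext w' = odd_ext w \<circ> odd_ext u"
    using osb_mor_odd_ext[OF u(1)] by (simp add: odd_ext_comp)
  then show "op_le (mor_of_word w) (mor_of_word w')" unfolding op_le_def mor_of_word_def by auto
qed

lemma op_le_iff_principal_lang:
  "\<phi> \<in> mors_out n \<Longrightarrow> \<phi>' \<in> mors_out n' \<Longrightarrow> op_le \<phi> \<phi>' \<longleftrightarrow> iota \<phi>' \<in> principal_lang (iota \<phi>)"
  using op_le_mor_of_word by (metis mors_out_iota)

lemma principal_lang_refl: "w \<in> principal_lang w"
  unfolding principal_lang_def using osb_word_upto[of "length w"] by force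

lemma principal_lang_trans:
  assumes "w' \<in> principal_lang w" and "w'' \<in> principal_lang w'"
  shows "w'' \<in> principal_lang w"
proof -
  obtain u where u: "osb_word (length w) u" "w' = map (odd_ext w) u"
    using assms(1) unfolding principal_lang_def by blast
  obtain v where v: "osb_word (length w') v" "w'' = map (odd_ext w') v"
    using assms(2) unfolding principal_lang_def by blast
  have "w'' = map (odd_ext w) (map (odd_ext u) v)"
    using u(2) v(2) by (simp flip: odd_ext_comp)
  moreover have "osb_word (length w) (map (odd_ext u) v)"
    using osb_word_comp[OF v(1) u(1)] u(2) by simp
  ultimately show ?thesis unfolding principal_lang_def by blast
qed

lemma osb_word_principal_lang: "osb_word n w \<Longrightarrow> w' \<in> principal_lang w \<Longrightarrow> osb_word n w'"
  unfolding principal_lang_def using osb_word_comp by blast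

lemma principal_lang_length:
  assumes "w' \<in> principal_lang w"
  shows "length w \<le> length w'" and "length w' = length w \<Longrightarrow> w' = w"
proof -
  obtain u where u: "osb_word (length w) u" "w' = map (odd_ext w) u"
    using assms unfolding principal_lang_def by blast
  show "length w \<le> length w'" using osb_word_length[OF u(1)] u(2) by simp
  assume "length w' = length w"
  then have "u = [1 .. int (length w)]" using osb_word_length_eq[OF u(1)] u(2) by simp
  then show "w' = w" using u(2) by simp
qed

lemma principal_lang_Nil: "principal_lang [] = lists {0}"
proof -
  have zero: "odd_ext [] = (\<lambda>_. 0)" by (auto simp: odd_ext_def)
  show ?thesis
  proof
    show "principal_lang [] \<subseteq> lists {0}" unfolding principal_lang_def zero by auto
    show "lists {0} \<subseteq> principal_lang []"
    proof
      fix w :: "int list" assume w: "w \<in> lists {0}"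
      then have "w = map (\<lambda>_. 0) w" by (induction w) auto
      moreover have "osb_word 0 w" using w by (auto simp: osb_word_0)
      ultimately have "w \<in> {map (\<lambda>_. 0) u | u. osb_word 0 u}" by blast
      then show "w \<in> principal_lang []" by (simp add: principal_lang_def zero)
    qed
  qed
qed

lemma map_odd_ext_append:
  assumes "set v \<subseteq> {- int (length w) .. int (length w)}"
  shows "map (odd_ext (w @ y)) v = map (odd_ext w) v"
proof (rule map_cong[OF refl])
  fix d assume "d \<in> set v"
  with assms have "d \<in> {- int (length w) .. int (length w)}" by blast
  then have "\<bar>d\<bar> \<le> int (length w)" by (simp add: abs_le_iff)
  then show "odd_ext (w @ y) d = odd_ext w d" by (rule odd_ext_append)
qed

lemma principal_lang_snoc:
  "principal_lang (w @ [x]) =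
     {v @ x # b | v b. v \<in> principal_lang w \<and> b \<in> lists (signed_letters (w @ [x]))}"
  (is "?L = ?R")
proof
  let ?m = "length w"
  have top: "odd_ext (w @ [x]) (int (Suc ?m)) = x" by simp
  show "?L \<subseteq> ?R"
  proof
    fix w' assume "w' \<in> ?L"
    then obtain u where u: "osb_word (Suc ?m) u" "w' = map (odd_ext (w @ [x])) u"
      unfolding principal_lang_def by auto
    then obtain v b where vb: "u = v @ int (Suc ?m) # b" "osb_word ?m v"
      "set b \<subseteq> {- int (Suc ?m) .. int (Suc ?m)}"
      by (elim osb_word_SucE)
    have "map (odd_ext w) v \<in> principal_lang w" using vb(2) unfolding principal_lang_def by blast
    moreover have "set (map (odd_ext (w @ [x])) b) \<subseteq> signed_letters (w @ [x])"
      using image_mono[OF vb(3), of "odd_ext (w @ [x])"] odd_ext_image[of "w @ [x]"] by simp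
    then have "map (odd_ext (w @ [x])) b \<in> lists (signed_letters (w @ [x]))"
      by (simp add: lists_eq_set)
    moreover have "w' = map (odd_ext w) v @ x # map (odd_ext (w @ [x])) b"
      using u(2) vb(1) map_odd_ext_append[OF osb_word_letters[OF vb(2)]] top by simp
    ultimately show "w' \<in> ?R" by blast
  qed
  show "?R \<subseteq> ?L"
  proof
    fix w' assume "w' \<in> ?R"
    then obtain a b where ab: "w' = a @ x # b" "a \<in> principal_lang w"
      "b \<in> lists (signed_letters (w @ [x]))"
      by blast
    obtain v where v: "osb_word ?m v" "a = map (odd_ext w) v"
      using ab(2) unfolding principal_lang_def by blast
    have "b \<in> lists (odd_ext (w @ [x]) ` {- int (Suc ?m) .. int (Suc ?m)})"
      using ab(3) odd_ext_image[of "w @ [x]"] by simp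
    then obtain B where B: "B \<in> lists {- int (Suc ?m) .. int (Suc ?m)}" "b = map (odd_ext (w @ [x])) B"
      unfolding lists_image by blast
    have "osb_word (Suc ?m) (v @ int (Suc ?m) # B)" using osb_word_SucI[OF v(1)] B(1) by blast
    moreover have "w' = map (odd_ext (w @ [x])) (v @ int (Suc ?m) # B)"
      using ab(1) v(2) B(2) map_odd_ext_append[OF osb_word_letters[OF v(1)]] top by simp
    ultimately show "w' \<in> ?L" unfolding principal_lang_def length_append_singleton by blast
  qed
qed

lemma principal_lang_snoc_letter:
  assumes "v \<in> principal_lang w" and "y \<in> signed_letters w"
  shows "v @ [y] \<in> principal_lang w"
proof -
  obtain u where u: "osb_word (length w) u" "v = map (odd_ext w) u"
    using assms(1) unfolding principal_lang_def by blast
  have "y \<in> odd_ext w ` {- int (length w) .. int (length w)}"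
    using assms(2) odd_ext_image[of w] by simp
  then obtain d where d: "y = odd_ext w d" "d \<in> {- int (length w) .. int (length w)}"
    by (rule imageE)
  have "osb_word (length w) (u @ [d])" using osb_word_append[OF u(1)] d(2) by simp
  moreover have "v @ [y] = map (odd_ext w) (u @ [d])" using u(2) d(1) by simp
  ultimately show ?thesis unfolding principal_lang_def by blast
qed

lemma principal_lang_ordlang:
  assumes "set w \<subseteq> \<Sigma>" and "0 \<in> \<Sigma>" and "\<And>y. y \<in> \<Sigma> \<Longrightarrow> - y \<in> \<Sigma>"
  shows "principal_lang w \<in> ordlang \<Sigma>"
  using assms(1)
proof (induction w rule: rev_induct)
  case Nil
  show ?case unfolding principal_lang_Nil using assms(2) by (intro ordlang.star) simp
next
  case (snoc x w)
  have "signed_letters (w @ [x]) \<subseteq> \<Sigma>"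
    using snoc.prems assms(2,3) unfolding signed_letters_def by auto
  then have "lists (signed_letters (w @ [x])) \<in> ordlang \<Sigma>" by (rule ordlang.star)
  moreover have "{[x]} \<in> ordlang \<Sigma>" using snoc.prems by (simp add: ordlang.single)
  ultimately have "{u @ v | u v. u \<in> {[x]} \<and> v \<in> lists (signed_letters (w @ [x]))} \<in> ordlang \<Sigma>"
    using ordlang.concat by blast
  moreover have "{u @ v | u v. u \<in> {[x]} \<and> v \<in> lists (signed_letters (w @ [x]))} =
      {x # b | b. b \<in> lists (signed_letters (w @ [x]))}"
    by auto
  ultimately have tail: "{x # b | b. b \<in> lists (signed_letters (w @ [x]))} \<in> ordlang \<Sigma>"
    by simp
  have "principal_lang w \<in> ordlang \<Sigma>" using snoc by simp
  from ordlang.concat[OF this tail]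
  have "{u @ v | u v. u \<in> principal_lang w \<and> v \<in> {x # b | b. b \<in> lists (signed_letters (w @ [x]))}}
      \<in> ordlang \<Sigma>" .
  moreover have "{u @ v | u v. u \<in> principal_lang w \<and> v \<in> {x # b | b. b \<in> lists (signed_letters (w @ [x]))}}
      = principal_lang (w @ [x])"
    unfolding principal_lang_snoc by blast
  ultimately show ?case by simp
qed

lemma op_le_refl: "\<phi> \<in> mors_out n \<Longrightarrow> op_le \<phi> \<phi>"
  using op_le_iff_principal_lang principal_lang_refl by blast

lemma op_le_trans:
  assumes "\<phi> \<in> mors_out n" "\<phi>' \<in> mors_out n'" "\<phi>'' \<in> mors_out n''"
    and "op_le \<phi> \<phi>'" "op_le \<phi>' \<phi>''"
  shows "op_le \<phi> \<phi>''"
  using assms op_le_iff_principal_lang principal_lang_trans by meson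

lemma length_iota: "length (iota \<phi>) = fst \<phi>"
  by (simp add: iota_def)

lemma op_le_fst:
  assumes "\<phi> \<in> mors_out n" "\<phi>' \<in> mors_out n'" and "op_le \<phi> \<phi>'"
  shows "fst \<phi> \<le> fst \<phi>'" and "fst \<phi>' = fst \<phi> \<Longrightarrow> \<phi>' = \<phi>"
proof -
  have "iota \<phi>' \<in> principal_lang (iota \<phi>)" using assms op_le_iff_principal_lang by blast
  note lengths = principal_lang_length[OF this, unfolded length_iota]
  show "fst \<phi> \<le> fst \<phi>'" by (rule lengths(1))
  assume "fst \<phi>' = fst \<phi>"
  then have "iota \<phi>' = iota \<phi>" by (rule lengths(2))
  then show "\<phi>' = \<phi>" using mors_out_iota assms(1,2) by metis
qed

lemma op_le_antisym:
  assumes "\<phi> \<in> mors_out n" "\<phi>' \<in> mors_out n'" and "op_le \<phi> \<phi>'" "op_le \<phi>' \<phi>"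
  shows "\<phi> = \<phi>'"
proof -
  have "fst \<phi>' = fst \<phi>" using op_le_fst(1)[OF assms(1,2,3)] op_le_fst(1)[OF assms(2,1,4)] by simp
  then show ?thesis using op_le_fst(2)[OF assms(1,2,3)] by simp
qed

theorem directed_OSB_op: directed_OSB_op
  unfolding directed_OSB_op_def
proof (intro allI impI)
  fix n f assume "osb_mor n n f"
  then obtain w where "length w = n" "osb_word n w" "f = odd_ext w"
    by (auto simp: osb_mor_iff_odd_ext)
  then have "f = odd_ext [1 .. int n]" using osb_word_length_eq by simp
  then show "f = (\<lambda>e. if \<bar>e\<bar> \<le> int n then e else 0)" by (simp add: odd_ext_upto)
qed

section \<open>The well-order of condition (G1)\<close>

lemma lex_nthI:
  assumes "length xs = length ys" and "q < length xs" and "take q xs = take q ys"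
    and "(xs ! q, ys ! q) \<in> r"
  shows "(xs, ys) \<in> lex r"
proof -
  have "xs = take q xs @ xs ! q # drop (Suc q) xs" using assms(2) by (rule id_take_nth_drop)
  moreover have "ys = take q xs @ ys ! q # drop (Suc q) ys"
    using id_take_nth_drop[of q ys] assms(1-3) by simp
  ultimately show ?thesis unfolding lex_conv using assms(1,4) by blast
qed

text \<open>The first difference of \<open>w\<close> and \<open>w'\<close>, at position \<open>j\<close>, is carried to the first occurrence
  of \<open>j + 1\<close> in \<open>u\<close>; before it, \<open>u\<close> only reads letters of \<open>w\<close> and \<open>w'\<close> left of \<open>j\<close>.\<close>
lemma lex_map_odd_ext:
  assumes lex: "(w, w') \<in> lex r" and u: "osb_word (length w) u"
  shows "(map (odd_ext w) u, map (odd_ext w') u) \<in> lex r"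
proof -
  obtain j where j: "j < length w" "j < length w'" "take j w = take j w'" "(w ! j, w' ! j) \<in> r"
    using lex_take_index[OF lex] by blast
  have "1 + int j \<in> {1 .. int (length w)}" using j(1) by auto
  then obtain q where q: "q < length u" "u ! q = 1 + int j" "\<forall>i < q. \<bar>u ! i\<bar> < 1 + int j"
    using u by (rule osb_wordE)
  have agree: "odd_ext w (u ! i) = odd_ext w' (u ! i)" if "i < q" for i
  proof -
    have "\<bar>u ! i\<bar> \<le> int j" using q(3) that by fastforce
    then show ?thesis using odd_ext_take[of "u ! i" j] j(3) by metis
  qed
  show ?thesis
  proof (rule lex_nthI)
    show "take q (map (odd_ext w) u) = take q (map (odd_ext w') u)"
      using agree q(1) by (intro nth_equalityI) auto
  qed (use q j in simp_all)
qed

lemma well_order_on_inv_image: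
  assumes "inj_on key A" and "wf R" and "trans R" and "total R"
  shows "well_order_on A {(x, y). x \<in> A \<and> y \<in> A \<and> (x = y \<or> (key x, key y) \<in> R)}"
    (is "well_order_on A ?r")
  unfolding well_order_on_def linear_order_on_def partial_order_on_def preorder_on_def
proof (intro conjI)
  have irrefl: "(z, z) \<notin> R" for z using assms(2) by simp
  show "?r \<subseteq> A \<times> A" "refl_on A ?r" by (auto simp: refl_on_def)
  show "trans ?r" using assms(3) unfolding trans_def by blast
  show "antisym ?r" using assms(3) irrefl unfolding antisym_def trans_def by blast
  show "total_on A ?r"
    using assms(1,4) unfolding total_on_def inj_on_def by blast
  have "?r - Id \<subseteq> inv_image R key" by auto
  then show "wf (?r - Id)" by (rule wf_subset[OF wf_inv_image[OF assms(2)]])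
qed

lemma mor_of_word_comp: "(length u, odd_ext w \<circ> odd_ext u) = mor_of_word (map (odd_ext w) u)"
  by (simp add: mor_of_word_def odd_ext_comp)

lemma osb_mor_comp:
  assumes "osb_mor k m g" and "osb_mor m n f"
  shows "osb_mor k n (f \<circ> g)"
proof -
  obtain u where u: "length u = k" "osb_word m u" "g = odd_ext u"
    using assms(1) unfolding osb_mor_iff_odd_ext by blast
  obtain w where w: "length w = m" "osb_word n w" "f = odd_ext w"
    using assms(2) unfolding osb_mor_iff_odd_ext by blast
  have "f \<circ> g = odd_ext (map (odd_ext w) u)" using u(3) w(3) by (simp add: odd_ext_comp)
  moreover have "osb_word n (map (odd_ext w) u)" using osb_word_comp[OF u(2) w(2,1)] .
  ultimately show ?thesis
    unfolding osb_mor_iff_odd_ext by (intro exI[of _ "map (odd_ext w) u"]) (simp add: u(1))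
qed

lemma iota_comp_lex:
  assumes "osb_mor m n f" "osb_mor m n f'" "osb_mor k m g"
    and "(iota (m, f), iota (m, f')) \<in> lex r"
  shows "(iota (k, f \<circ> g), iota (k, f' \<circ> g)) \<in> lex r"
proof -
  obtain w where w: "length w = m" "f = odd_ext w"
    using assms(1) unfolding osb_mor_iff_odd_ext by blast
  obtain w' where w': "length w' = m" "f' = odd_ext w'"
    using assms(2) unfolding osb_mor_iff_odd_ext by blast
  obtain u where u: "length u = k" "osb_word m u" "g = odd_ext u"
    using assms(3) unfolding osb_mor_iff_odd_ext by blast
  have "(m, f) = mor_of_word w" "(m, f') = mor_of_word w'"
    using w w' by (simp_all add: mor_of_word_def)
  with assms(4) have "(w, w') \<in> lex r" by simp
  then have "(map (odd_ext w) u, map (odd_ext w') u) \<in> lex r"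
    using u(2) w(1) by (intro lex_map_odd_ext) simp_all
  moreover have "(k, f \<circ> g) = mor_of_word (map (odd_ext w) u)"
    "(k, f' \<circ> g) = mor_of_word (map (odd_ext w') u)"
    unfolding u(3) w(2) w'(2) u(1)[symmetric] by (rule mor_of_word_comp)+
  ultimately show ?thesis by simp
qed

text \<open>Since composition preserves \<open>lex r\<close> for every \<open>r\<close>, any well-order of the integers
  yields an admissible order; we use the one transported from the naturals.\<close>
theorem G1_OSB_op: G1_OSB_op
  unfolding G1_OSB_op_def
proof
  fix n
  define R where "R = lenlex (inv_image less_than int_encode)"
  define r where "r = {(x, y). x \<in> mors_out n \<and> y \<in> mors_out n \<and> (x = y \<or> (iota x, iota y) \<in> R)}"
  have wf: "wf R" unfolding R_def by blast
  have "well_order_on (mors_out n) r"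
    unfolding r_def
  proof (rule well_order_on_inv_image[OF _ wf])
    show "inj_on iota (mors_out n)" by (metis inj_onI mors_out_iota)
    show "trans R" unfolding R_def by (intro lenlex_transI trans_inv_image trans_less_than)
    show "total R"
      unfolding R_def by (intro total_lenlex total_inv_image inj_int_encode total_less_than)
  qed
  moreover have "((k, f \<circ> g), (k, f' \<circ> g)) \<in> r - Id"
    if f: "osb_mor m n f" and f': "osb_mor m n f'" and g: "osb_mor k m g"
      and less: "((m, f), (m, f')) \<in> r - Id" for m k f f' g
  proof -
    have "(iota (m, f), iota (m, f')) \<in> lex (inv_image less_than int_encode)"
      using less unfolding r_def R_def lenlex_conv by (simp add: length_iota) blast
    then have "(iota (k, f \<circ> g), iota (k, f' \<circ> g)) \<in> R"
      using iota_comp_lex[OF f f' g] unfolding R_def lenlex_conv by (simp add: length_iota)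
    moreover from this have "(k, f \<circ> g) \<noteq> (k, f' \<circ> g)" using wf_not_refl[OF wf] by metis
    moreover have "(k, f \<circ> g) \<in> mors_out n" "(k, f' \<circ> g) \<in> mors_out n"
      using osb_mor_comp[OF g f] osb_mor_comp[OF g f'] unfolding mors_out_def by simp_all
    ultimately show ?thesis unfolding r_def by simp
  qed
  ultimately show "\<exists>r. well_order_on (mors_out n) r \<and>
      (\<forall>m k f f' g. osb_mor m n f \<longrightarrow> osb_mor m n f' \<longrightarrow> osb_mor k m g \<longrightarrow>
        ((m, f), (m, f')) \<in> r - Id \<longrightarrow> ((k, f \<circ> g), (k, f' \<circ> g)) \<in> r - Id)"
    by blast
qed

section \<open>Noetherianity and ordered languages\<close>

definition annotate :: "int list \<Rightarrow> (int \<times> int set) list" where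
  "annotate w = map (\<lambda>i. (w ! i, signed_letters (take i w))) [0 ..< length w]"

lemma annotate_Nil [simp]: "annotate [] = []"
  by (simp add: annotate_def)

lemma annotate_snoc: "annotate (w @ [x]) = annotate w @ [(x, signed_letters w)]"
  by (simp add: annotate_def nth_append)

lemma length_annotate [simp]: "length (annotate w) = length w"
  by (simp add: annotate_def)

lemma set_annotate_subset:
  assumes "set w \<subseteq> {- int n .. int n}"
  shows "set (annotate w) \<subseteq> {- int n .. int n} \<times> Pow {- int n .. int n}"
proof -
  have "signed_letters (take i w) \<subseteq> {- int n .. int n}" for i
    using signed_letters_subset[OF order_trans[OF set_take_subset assms]] .
  then show ?thesis using assms unfolding annotate_def by auto
qed

text \<open>Each letter is annotated with the letters seen before it, so an embedding of annotated words
  is an embedding of \<open>w\<close> into \<open>w'\<close> whose gaps are filled with letters already available.\<close>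
lemma principal_lang_if_subseq_annotate:
  "subseq (annotate w) (annotate w') \<Longrightarrow> signed_letters w' \<subseteq> signed_letters w \<Longrightarrow> w' \<in> principal_lang w"
proof (induction w' arbitrary: w rule: rev_induct)
  case Nil
  then have "w = []" by (metis length_0_conv length_annotate list_emb_Nil2)
  then show ?case by (simp add: principal_lang_Nil)
next
  case (snoc x w' w)
  from snoc.prems(1) have "subseq (annotate w) (annotate w' @ [(x, signed_letters w')])"
    by (simp add: annotate_snoc)
  then obtain X1 X2 where X: "annotate w = X1 @ X2" "subseq X1 (annotate w')" "subseq X2 [(x, signed_letters w')]"
    by (rule subseq_appendE)
  have letters: "signed_letters w' \<subseteq> signed_letters w"
    using snoc.prems(2) signed_letters_mono by blast
  consider "X2 = []" | "X2 = [(x, signed_letters w')]"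
    using X(3) by (cases X2) (auto split: if_splits)
  then show ?case
  proof cases
    case 1
    then have "w' \<in> principal_lang w" using snoc.IH X letters by simp
    moreover have "x \<in> signed_letters w" using snoc.prems(2) unfolding signed_letters_def by auto
    ultimately show ?thesis by (rule principal_lang_snoc_letter)
  next
    case 2
    then obtain w0 y where w: "w = w0 @ [y]" using X(1) by (cases w rule: rev_cases) auto
    then have "annotate w0 = X1" "y = x" "signed_letters w0 = signed_letters w'"
      using X(1) 2 by (auto simp: annotate_snoc)
    then have "w' \<in> principal_lang w0" using snoc.IH X by simp
    then show ?thesis unfolding w \<open>y = x\<close> principal_lang_snoc by force
  qed
qed

lemma almost_full_on_op_le: "almost_full_on op_le (mors_out n)"
proof (rule almost_full_on_inv_image)
  let ?\<Sigma> = "{- int n .. int n} \<times> Pow {- int n .. int n}"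
  show "almost_full_on subseq (lists ?\<Sigma>)" by (rule higman) simp
  show "(\<lambda>\<phi>. annotate (iota \<phi>)) ` mors_out n \<subseteq> lists ?\<Sigma>"
  proof
    fix a assume "a \<in> (\<lambda>\<phi>. annotate (iota \<phi>)) ` mors_out n"
    then obtain \<phi> where "\<phi> \<in> mors_out n" "a = annotate (iota \<phi>)" by blast
    then have "set a \<subseteq> ?\<Sigma>" using set_annotate_subset[OF osb_word_letters[OF osb_word_iota]] by simp
    then show "a \<in> lists ?\<Sigma>" by (simp add: lists_eq_set)
  qed
  fix \<phi> \<phi>' assume \<phi>: "\<phi> \<in> mors_out n" "\<phi>' \<in> mors_out n"
    and "subseq (annotate (iota \<phi>)) (annotate (iota \<phi>'))"
  moreover have "signed_letters (iota \<phi>') = signed_letters (iota \<phi>)"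
    using \<phi> signed_letters_osb_word osb_word_iota by metis
  ultimately show "op_le \<phi> \<phi>'"
    using op_le_iff_principal_lang principal_lang_if_subseq_annotate by auto
qed

definition minimal_elements :: "(nat \<times> (int \<Rightarrow> int)) set \<Rightarrow> (nat \<times> (int \<Rightarrow> int)) set" where
  "minimal_elements I = {x \<in> I. \<forall>y \<in> I. op_le y x \<longrightarrow> op_le x y}"

lemma finite_minimal_elements:
  assumes "upclosed (mors_out n) op_le I"
  shows "finite (minimal_elements I)"
proof (rule finite_antichain_if_almost_full_on[OF almost_full_on_op_le])
  have I: "I \<subseteq> mors_out n" using assms unfolding upclosed_def by blast
  then show "minimal_elements I \<subseteq> mors_out n" unfolding minimal_elements_def by blast
  fix x y assume "x \<in> minimal_elements I" "y \<in> minimal_elements I" "op_le x y"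
  then show "x = y" using op_le_antisym I unfolding minimal_elements_def by blast
qed

theorem G2_OSB_op: G2_OSB_op
  unfolding G2_OSB_op_def noetherian_preorder_def
  using finite_minimal_elements unfolding minimal_elements_def by blast

text \<open>A morphism of least length below \<open>\<phi>\<close> is minimal, since \<open>op_le\<close> increases lengths
  and is antisymmetric on morphisms of equal length.\<close>
lemma minimal_element_below:
  assumes I: "upclosed (mors_out n) op_le I" and "\<phi> \<in> I"
  obtains x where "x \<in> minimal_elements I" "op_le x \<phi>"
proof -
  have sub: "I \<subseteq> mors_out n" using I unfolding upclosed_def by blast
  have "\<phi> \<in> I \<and> op_le \<phi> \<phi>" using \<open>\<phi> \<in> I\<close> sub op_le_refl by blast
  then obtain x where x: "x \<in> I" "op_le x \<phi>"
    and least: "\<forall>y. y \<in> I \<and> op_le y \<phi> \<longrightarrow> fst x \<le> fst y"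
    using ex_has_least_nat[of "\<lambda>x. x \<in> I \<and> op_le x \<phi>" \<phi> fst] by blast
  have "op_le x y" if y: "y \<in> I" "op_le y x" for y
  proof -
    have mors: "x \<in> mors_out n" "y \<in> mors_out n" "\<phi> \<in> mors_out n"
      using x(1) y(1) \<open>\<phi> \<in> I\<close> sub by auto
    have "op_le y \<phi>" using op_le_trans[OF mors(2,1,3) y(2) x(2)] .
    then have "fst x \<le> fst y" using least y(1) by blast
    moreover have "fst y \<le> fst x" using op_le_fst(1)[OF mors(2,1) y(2)] .
    ultimately have "x = y" using op_le_fst(2)[OF mors(2,1) y(2)] by simp
    then show ?thesis using op_le_refl mors(1) by simp
  qed
  with x show thesis by (intro that) (auto simp: minimal_elements_def)
qed

lemma iota_upclosed:
  assumes I: "upclosed (mors_out n) op_le I"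
  shows "iota ` I = (\<Union>x \<in> minimal_elements I. principal_lang (iota x))"
proof
  have sub: "I \<subseteq> mors_out n" using I unfolding upclosed_def by blast
  have min_sub: "minimal_elements I \<subseteq> I" unfolding minimal_elements_def by blast
  show "iota ` I \<subseteq> (\<Union>x \<in> minimal_elements I. principal_lang (iota x))"
  proof
    fix w assume "w \<in> iota ` I"
    then obtain \<phi> where \<phi>: "\<phi> \<in> I" "w = iota \<phi>" by blast
    obtain x where x: "x \<in> minimal_elements I" "op_le x \<phi>"
      using minimal_element_below[OF I \<phi>(1)] .
    have "x \<in> mors_out n" "\<phi> \<in> mors_out n" using x(1) \<phi>(1) min_sub sub by auto
    then have "w \<in> principal_lang (iota x)" using x(2) \<phi>(2) op_le_iff_principal_lang by blast
    with x(1) show "w \<in> (\<Union>x \<in> minimal_elements I. principal_lang (iota x))" by blast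
  qed
  show "(\<Union>x \<in> minimal_elements I. principal_lang (iota x)) \<subseteq> iota ` I"
  proof
    fix w' assume "w' \<in> (\<Union>x \<in> minimal_elements I. principal_lang (iota x))"
    then obtain x where x: "x \<in> I" "w' \<in> principal_lang (iota x)" using min_sub by blast
    then have xm: "x \<in> mors_out n" using sub by blast
    then have "mor_of_word w' \<in> mors_out n"
      using osb_word_principal_lang[OF osb_word_iota x(2)] mor_of_word_in_mors_out by blast
    moreover have "op_le x (mor_of_word w')"
      using op_le_mor_of_word[of "iota x" w'] x(2) mors_out_iota[OF xm] by simp
    ultimately have "mor_of_word w' \<in> I" using I x(1) unfolding upclosed_def by blast
    then show "w' \<in> iota ` I" by (metis iota_mor_of_word image_eqI)
  qed
qed

lemma ordlang_UN:
  "finite F \<Longrightarrow> (\<And>x. x \<in> F \<Longrightarrow> L x \<in> ordlang \<Sigma>) \<Longrightarrow> (\<Union>x \<in> F. L x) \<in> ordlang \<Sigma>"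
  by (induction F rule: finite_induct) (simp_all add: ordlang.empty ordlang.union)

theorem O_lingual_OSB_op: O_lingual_OSB_op
  unfolding O_lingual_OSB_op_def
proof (intro allI conjI ballI impI)
  fix n
  show "set (iota \<phi>) \<subseteq> {- int n .. int n}" if "\<phi> \<in> mors_out n" for \<phi>
    using osb_word_letters[OF osb_word_iota[OF that]] .
  show "length (iota \<phi>) = fst \<phi>" for \<phi> by (rule length_iota)
  show "iota \<phi> = iota \<phi>' \<longleftrightarrow> op_le \<phi> \<phi>' \<and> op_le \<phi>' \<phi>"
    if "\<phi> \<in> mors_out n" "\<phi>' \<in> mors_out n" for \<phi> \<phi>'
    using that op_le_refl op_le_antisym mors_out_iota by metis
  fix I assume I: "upclosed (mors_out n) op_le I"
  have "principal_lang (iota x) \<in> ordlang {- int n .. int n}" if "x \<in> minimal_elements I" for x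
  proof (rule principal_lang_ordlang)
    have "x \<in> mors_out n" using that I unfolding minimal_elements_def upclosed_def by blast
    then show "set (iota x) \<subseteq> {- int n .. int n}" by (intro osb_word_letters osb_word_iota)
  qed auto
  then show "iota ` I \<in> ordlang {- int n .. int n}"
    unfolding iota_upclosed[OF I] using finite_minimal_elements[OF I] by (intro ordlang_UN)
qed

theorem mainTheorem10:
  shows "groebner_OSB_op \<and> O_lingual_OSB_op"
  unfolding groebner_OSB_op_def using directed_OSB_op G1_OSB_op G2_OSB_op O_lingual_OSB_op by blast

end
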